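(* Let $n\ge 2$ and $1\le m\le n-1$ be integers, and let $\alpha=(\alpha_0,\dots,\alpha_m)$ and $\beta=(\beta_0,\dots,\beta_m)$ be sequences of complex numbers. Let $A = T^{(\alpha,m)} - H^{(\alpha,m)}$ and $B = T^{(\beta,m)} - H^{(\beta,m)}$, where $T^{(\xi,m)}$ and $H^{(\xi,m)}$ are the $n\times n$ matrices defined in the context. Assume that $B$ is invertible. Set $h = \frac{1}{n+1/2}$ and, for $j=1,\dots,n$, $$\lambda_j = \frac{\alpha_0 + 2\sum_{l=1}^{m}\alpha_l\cos(l j\pi h)}{\beta_0 + 2\sum_{l=1}^{m}\beta_l\cos(l j\pi h)},\qquad \boldsymbol{x}_j=(x_{j,1},\dots,x_{j,n})^T,\quad x_{j,k} = C\sin\!\big(j\pi(k-1/2)h\big),\ k=1,\dots,n,$$ where $C\neq 0$ is a constant. Then for every $j=1,\dots,n$, $(\lambda_j,\boldsymbol{x}_j)$ is an eigenpair of the generalised matrix eigenvalue problem $A\boldsymbol{x}=\lambda B\boldsymbol{x}$, i.e. $A\boldsymbol{x}_j=\lambda_j B\boldsymbol{x}_j$.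
   Context: For a sequence $\xi=(\xi_0,\xi_1,\dots,\xi_m)$ of complex numbers and $m\le n-1$, $T^{(\xi,m)}\in\mathbb{C}^{n\times n}$ is the symmetric banded Toeplitz matrix with entries $T^{(\xi,m)}_{j,j+k}=\xi_{|k|}$ if $|k|\le m$ (for all $j$ and integers $k$ with $1\le j, j+k\le n$) and all other entries $0$. $H^{(\xi,m)}\in\mathbb{C}^{n\times n}$ is the Hankel-type matrix with entries: $H^{(\xi,m)}_{j,k}=\xi_{j+k-1}$ for $j=1,\dots,m$ and $k=1,\dots,m-j+1$ (upper-left corner); $H^{(\xi,m)}_{n-j+1,\,n-k+1}=\xi_{j+k}$ for $j=1,\dots,m-1$ and $k=1,\dots,m-j$ (lower-right corner; this part is empty when $m=1$); and all other entries $0$. For example, for $m=2$ the matrix $A=T^{(\alpha,2)}-H^{(\alpha,2)}$ has first row $(\alpha_0-\alpha_1,\ \alpha_1-\alpha_2,\ \alpha_2,0,\dots)$, second row $(\alpha_1-\alpha_2,\ \alpha_0,\ \alpha_1,\ \alpha_2,0,\dots)$, and last diagonal entry $\alpha_0-\alpha_2$, with all other entries as in $T^{(\alpha,2)}$. *)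

theory Defs
  imports Complex_Main "Jordan_Normal_Form.Matrix"
begin

text \<open>Matrices are Jordan_Normal_Form matrices with 0-based indices: entry (i,k)
  corresponds to the paper's entry (i+1,k+1). A sequence xi = (xi_0,...,xi_m) is
  a function nat => complex of which only the values xi 0, ..., xi m are used.\<close>

definition toep :: "(nat \<Rightarrow> complex) \<Rightarrow> nat \<Rightarrow> nat \<Rightarrow> complex mat" where
  "toep xi m n = mat n n (\<lambda>(i,k).
     (let d = (if i \<le> k then k - i else i - k) in if d \<le> m then xi d else 0))"

text \<open>Upper-left block: paper (j,k) with j+k \<le> m+1 gets xi (j+k-1); in 0-based indices
  (i,k) with i+k+1 \<le> m gets xi (i+k+1).
  Lower-right block: paper (n-j+1, n-k+1) with j,k \<ge> 1, j+k \<le> m gets xi (j+k);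
  in 0-based indices (r,c) = (n-j, n-k), so j+k = 2n-r-c.\<close>
definition hank :: "(nat \<Rightarrow> complex) \<Rightarrow> nat \<Rightarrow> nat \<Rightarrow> complex mat" where
  "hank xi m n = mat n n (\<lambda>(i,k).
     if i + k + 1 \<le> m then xi (i + k + 1)
     else if 2 * n - i - k \<le> m then xi (2 * n - i - k)
     else 0)"

end

theory Submission
  imports Defs
begin

text \<open>Extend x_j to all integer indices by S z = C sin (t (z + 1/2)) with t = j pi h. This
  sequence is odd about -1/2 and about n (since t (2n+1) = 2 j pi), and it satisfies
  S (z+l) + S (z-l) = 2 cos (l t) S z. By the two symmetries the Hankel corrections in row i of
  T - H are exactly the band entries that reach the mirror images -1-k and 2n-k of the columns,
  so row i applied to x is the full symmetric band sum around i, which the three-term identity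
  evaluates to the symbol of xi at t times S i. Hence x_j is a common eigenvector of A and B,
  and invertibility of B forces the eigenvalue of B to be nonzero.\<close>

definition toeplitz_symbol :: "(nat \<Rightarrow> complex) \<Rightarrow> nat \<Rightarrow> real \<Rightarrow> complex" where
  "toeplitz_symbol \<xi> m t = \<xi> 0 + 2 * (\<Sum>l=1..m. \<xi> l * complex_of_real (cos (real l * t)))"

lemma sum_symmetric_interval_int:
  fixes g :: "int \<Rightarrow> 'a::comm_monoid_add"
  shows "(\<Sum>d\<in>{-int m..int m}. g d) = g 0 + (\<Sum>l=1..m. g (int l) + g (- int l))"
proof (induction m)
  case 0
  then show ?case by simp
next
  case (Suc m)
  have "{-int (Suc m)..int (Suc m)} = insert (- int (Suc m)) (insert (int (Suc m)) {-int m..int m})"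
    by auto
  then show ?case using Suc by (simp add: algebra_simps)
qed

lemma sum_with_reflections:
  fixes F :: "int \<Rightarrow> 'a::comm_monoid_add"
  assumes "F (int n) = 0"
  shows "(\<Sum>k<n. F (int k) + F (-1 - int k) + F (2 * int n - int k)) = (\<Sum>z\<in>{-int n..2 * int n}. F z)"
proof -
  have "(\<Sum>k<n. F (int k) + F (-1 - int k) + F (2 * int n - int k))
      = (\<Sum>k<n. F (int k)) + (\<Sum>k<n. F (-1 - int k)) + (\<Sum>k<n. F (2 * int n - int k))"
    by (simp only: sum.distrib)
  also have "(\<Sum>k<n. F (int k)) = (\<Sum>z\<in>{0..<int n}. F z)"
    by (rule sum.reindex_bij_witness[where i=nat and j=int]) auto
  also have "(\<Sum>k<n. F (-1 - int k)) = (\<Sum>z\<in>{-int n..-1}. F z)"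
    by (rule sum.reindex_bij_witness[where i="\<lambda>z. nat (-1 - z)" and j="\<lambda>k. -1 - int k"]) auto
  also have "(\<Sum>k<n. F (2 * int n - int k)) = (\<Sum>z\<in>{int n + 1..2 * int n}. F z)"
    by (rule sum.reindex_bij_witness[where i="\<lambda>z. nat (2 * int n - z)" and j="\<lambda>k. 2 * int n - int k"]) auto
  also have "(\<Sum>z\<in>{0..<int n}. F z) + (\<Sum>z\<in>{-int n..-1}. F z) + (\<Sum>z\<in>{int n + 1..2 * int n}. F z)
      = (\<Sum>z\<in>{-int n..2 * int n}. F z)"
  proof -
    have split: "{-int n..2 * int n} = {-int n..-1} \<union> ({0..<int n} \<union> ({int n + 1..2 * int n} \<union> {int n}))"
      by auto
    show ?thesis unfolding split
      by (subst sum.union_disjoint; (auto)?)+ (simp add: assms algebra_simps)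
  qed
  finally show ?thesis .
qed

lemma toep_minus_hank_entry_mult:
  fixes \<xi> S :: "_ \<Rightarrow> complex"
  assumes mn: "m \<le> n - 1" and ik: "i < n" "k < n"
    and reflect_left: "\<And>z. S (-1 - z) = - S z"
    and reflect_right: "\<And>z. S (2 * int n - z) = - S z"
  defines "F \<equiv> \<lambda>z. if \<bar>z - int i\<bar> \<le> int m then \<xi> (nat \<bar>z - int i\<bar>) * S z else 0"
  shows "(toep \<xi> m n - hank \<xi> m n) $$ (i,k) * S (int k)
     = F (int k) + F (-1 - int k) + F (2 * int n - int k)"
proof -
  have toep: "toep \<xi> m n $$ (i,k) * S (int k) = F (int k)"
    using ik by (auto simp: toep_def F_def Let_def nat_diff_distrib' intro!: arg_cong[where f=\<xi>])
  have hank: "- (hank \<xi> m n $$ (i,k) * S (int k)) = F (-1 - int k) + F (2 * int n - int k)"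
  proof (cases "i + k + 1 \<le> m")
    case True
    then have "\<not> \<bar>2 * int n - int k - int i\<bar> \<le> int m" using mn ik by auto
    moreover have "nat (int i - (- 1 - int k)) = Suc (i + k)" by simp
    ultimately show ?thesis
      using True ik reflect_left[of "int k"] by (simp add: hank_def F_def)
  next
    case False
    then have left_out: "F (-1 - int k) = 0" by (simp add: F_def)
    show ?thesis
    proof (cases "2 * n - i - k \<le> m")
      case True
      moreover have "nat (2 * int n - int k - int i) = 2 * n - i - k" using ik by simp
      ultimately show ?thesis
        using False ik reflect_right[of "int k"] left_out by (simp add: hank_def F_def)
    next
      case False
      then have "F (2 * int n - int k) = 0" using ik by (simp add: F_def)
      then show ?thesis using False \<open>\<not> i + k + 1 \<le> m\<close> left_out ik by (simp add: hank_def)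
    qed
  qed
  have entry_diff: "(toep \<xi> m n - hank \<xi> m n) $$ (i,k) = toep \<xi> m n $$ (i,k) - hank \<xi> m n $$ (i,k)"
    using ik by (simp add: toep_def hank_def)
  have "(toep \<xi> m n - hank \<xi> m n) $$ (i,k) * S (int k)
      = toep \<xi> m n $$ (i,k) * S (int k) + - (hank \<xi> m n $$ (i,k) * S (int k))"
    unfolding entry_diff by (simp add: left_diff_distrib)
  then show ?thesis unfolding toep hank by (simp add: add.assoc)
qed

lemma toep_minus_hank_row_sum:
  fixes \<xi> S :: "_ \<Rightarrow> complex"
  assumes mn: "m \<le> n - 1" and i: "i < n"
    and reflect_left: "\<And>z. S (-1 - z) = - S z"
    and reflect_right: "\<And>z. S (2 * int n - z) = - S z"
    and three_term: "\<And>z l. S (z + int l) + S (z - int l) = 2 * complex_of_real (cos (real l * t)) * S z"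
  shows "(\<Sum>k<n. (toep \<xi> m n - hank \<xi> m n) $$ (i,k) * S (int k)) = toeplitz_symbol \<xi> m t * S (int i)"
proof -
  define F where "F \<equiv> \<lambda>z. if \<bar>z - int i\<bar> \<le> int m then \<xi> (nat \<bar>z - int i\<bar>) * S z else 0"
  have "S (int n) = - S (int n)"
    using reflect_right[of "int n"] by (simp only: mult_2 add_diff_cancel_right')
  then have "S (int n) = 0"
    by (simp add: eq_neg_iff_add_eq_0 flip: mult_2)
  then have "F (int n) = 0" by (simp add: F_def)
  have "(\<Sum>k<n. (toep \<xi> m n - hank \<xi> m n) $$ (i,k) * S (int k))
     = (\<Sum>k<n. F (int k) + F (-1 - int k) + F (2 * int n - int k))"
    using toep_minus_hank_entry_mult[OF mn i _ reflect_left reflect_right] unfolding F_def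
    by (intro sum.cong) auto
  also have "\<dots> = (\<Sum>z\<in>{-int n..2 * int n}. F z)"
    by (rule sum_with_reflections) fact
  also have "\<dots> = (\<Sum>z\<in>{int i - int m..int i + int m}. F z)"
    using mn i by (intro sum.mono_neutral_right) (auto simp: F_def)
  also have "\<dots> = (\<Sum>d\<in>{-int m..int m}. F (int i + d))"
    by (rule sum.reindex_bij_witness[where j="\<lambda>z. z - int i" and i="\<lambda>d. int i + d"]) auto
  also have "\<dots> = F (int i) + (\<Sum>l=1..m. F (int i + int l) + F (int i - int l))"
    by (simp add: sum_symmetric_interval_int)
  also have "\<dots> = \<xi> 0 * S (int i) + (\<Sum>l=1..m. \<xi> l * (2 * complex_of_real (cos (real l * t)) * S (int i)))"
    by (auto simp: F_def distrib_left[symmetric] three_term intro!: sum.cong)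
  also have "\<dots> = toeplitz_symbol \<xi> m t * S (int i)"
    by (simp add: toeplitz_symbol_def algebra_simps sum_distrib_left sum_distrib_right)
  finally show ?thesis .
qed

lemma hank_carrier_mat: "hank \<xi> m n \<in> carrier_mat n n"
  by (simp add: hank_def)

lemma toep_minus_hank_mult_vec:
  fixes \<xi> S :: "_ \<Rightarrow> complex"
  assumes "m \<le> n - 1"
    and "\<And>z. S (-1 - z) = - S z"
    and "\<And>z. S (2 * int n - z) = - S z"
    and "\<And>z l. S (z + int l) + S (z - int l) = 2 * complex_of_real (cos (real l * t)) * S z"
  shows "(toep \<xi> m n - hank \<xi> m n) *\<^sub>v vec n (\<lambda>k. S (int k))
     = toeplitz_symbol \<xi> m t \<cdot>\<^sub>v vec n (\<lambda>k. S (int k))"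
proof (rule eq_vecI)
  fix i assume "i < dim_vec (toeplitz_symbol \<xi> m t \<cdot>\<^sub>v vec n (\<lambda>k. S (int k)))"
  then have i: "i < n" by simp
  have "((toep \<xi> m n - hank \<xi> m n) *\<^sub>v vec n (\<lambda>k. S (int k))) $ i
     = (\<Sum>k<n. (toep \<xi> m n - hank \<xi> m n) $$ (i,k) * S (int k))"
    using i by (simp add: scalar_prod_def toep_def hank_def lessThan_atLeast0)
  also have "\<dots> = toeplitz_symbol \<xi> m t * S (int i)"
    using toep_minus_hank_row_sum[OF assms(1) i assms(2-4)] .
  finally show "((toep \<xi> m n - hank \<xi> m n) *\<^sub>v vec n (\<lambda>k. S (int k))) $ i
     = (toeplitz_symbol \<xi> m t \<cdot>\<^sub>v vec n (\<lambda>k. S (int k))) $ i"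
    using i by simp
qed (simp add: toep_def hank_def)

text \<open>Indices are 0-based: the paper's x_{j,k} is shifted_sine C (j pi h) (k - 1).\<close>
definition shifted_sine :: "complex \<Rightarrow> real \<Rightarrow> int \<Rightarrow> complex" where
  "shifted_sine C t z = C * complex_of_real (sin (t * (of_int z + 1/2)))"

lemma shifted_sine_reflect_left: "shifted_sine C t (-1 - z) = - shifted_sine C t z"
proof -
  have "t * (of_int (-1 - z) + 1/2) = - (t * (of_int z + 1/2))"
    by (simp add: algebra_simps)
  then show ?thesis by (simp add: shifted_sine_def)
qed

lemma shifted_sine_reflect_right:
  assumes "t * (2 * real n + 1) = 2 * pi * real j"
  shows "shifted_sine C t (2 * int n - z) = - shifted_sine C t z"
proof -
  have full_turns: "sin (2 * pi * real j) = 0" "cos (2 * pi * real j) = 1"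
    using sin_npi[of "2 * j"] cos_npi[of "2 * j"] by (simp_all add: mult_ac)
  have "t * (of_int (2 * int n - z) + 1/2) = 2 * pi * real j - t * (of_int z + 1/2)"
    using assms by (simp add: algebra_simps)
  then show ?thesis by (simp add: shifted_sine_def sin_diff full_turns)
qed

lemma shifted_sine_three_term:
  "shifted_sine C t (z + int l) + shifted_sine C t (z - int l)
     = 2 * complex_of_real (cos (real l * t)) * shifted_sine C t z"
proof -
  have "t * (of_int (z + int l) + 1/2) = t * (of_int z + 1/2) + real l * t"
       "t * (of_int (z - int l) + 1/2) = t * (of_int z + 1/2) - real l * t"
    by (simp_all add: algebra_simps)
  moreover have "sin (x + y) + sin (x - y) = 2 * cos y * sin x" for x y :: real
    by (simp add: sin_add sin_diff)
  ultimately show ?thesis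
    by (simp add: shifted_sine_def flip: distrib_left of_real_add)
qed

lemma shifted_sine_zero_nonzero:
  assumes "C \<noteq> 0" "0 < t" "t < 2 * pi"
  shows "shifted_sine C t 0 \<noteq> 0"
  using assms sin_gt_zero[of "t / 2"] by (simp add: shifted_sine_def)

lemma invertible_mat_mult_vec_eq_zero:
  fixes B :: "'a :: semiring_1 mat"
  assumes B: "invertible_mat B" and x: "x \<in> carrier_vec (dim_col B)"
    and Bx: "B *\<^sub>v x = 0\<^sub>v (dim_row B)"
  shows "x = 0\<^sub>v (dim_col B)"
proof -
  obtain B' where BB': "B * B' = 1\<^sub>m (dim_row B)" and B'B: "B' * B = 1\<^sub>m (dim_row B')"
    using B unfolding invertible_mat_def inverts_mat_def by blast
  have B'_carrier: "B' \<in> carrier_mat (dim_col B) (dim_row B)"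
    using arg_cong[OF BB', of dim_col] arg_cong[OF B'B, of dim_col] by (auto intro: carrier_matI)
  have "x = (B' * B) *\<^sub>v x"
    using B'B B'_carrier x by simp
  also have "\<dots> = B' *\<^sub>v (B *\<^sub>v x)"
    using B'_carrier x by (intro assoc_mult_mat_vec) auto
  also have "\<dots> = 0\<^sub>v (dim_col B)"
    unfolding Bx using B'_carrier by (intro eq_vecI) (auto simp: scalar_prod_right_zero)
  finally show ?thesis .
qed

lemma generalized_eigenpair_of_common_eigenvector:
  fixes A B :: "'a :: field mat"
  assumes B: "B \<in> carrier_mat n n" "invertible_mat B"
    and x: "x \<in> carrier_vec n" "x \<noteq> 0\<^sub>v n"
    and eig_A: "A *\<^sub>v x = a \<cdot>\<^sub>v x" and eig_B: "B *\<^sub>v x = b \<cdot>\<^sub>v x"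
  shows "A *\<^sub>v x = (a / b) \<cdot>\<^sub>v (B *\<^sub>v x)"
proof -
  have "b \<noteq> 0"
  proof
    assume "b = 0"
    have dims: "dim_row B = n" "dim_col B = n"
      using B(1) by auto
    have "B *\<^sub>v x = 0\<^sub>v (dim_row B)"
      unfolding eig_B \<open>b = 0\<close> dims using x(1) by (intro eq_vecI) auto
    moreover have "x \<in> carrier_vec (dim_col B)"
      using x(1) dims by simp
    ultimately have "x = 0\<^sub>v n"
      using invertible_mat_mult_vec_eq_zero[OF B(2)] dims by metis
    with x(2) show False by contradiction
  qed
  then show ?thesis by (simp add: eig_A eig_B smult_smult_assoc)
qed

lemma toep_minus_hank_sine_generalized_eigenpair:
  fixes \<alpha> \<beta> :: "nat \<Rightarrow> complex"
  assumes m: "m \<le> n - 1" and B: "invertible_mat (toep \<beta> m n - hank \<beta> m n)"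
    and C: "C \<noteq> 0" and j: "1 \<le> j" "j \<le> n" and h: "h = 1 / (real n + 1/2)"
  defines "x \<equiv> vec n (\<lambda>k. C * complex_of_real (sin (real j * pi * (real (k + 1) - 1/2) * h)))"
  shows "x \<noteq> 0\<^sub>v n \<and> (toep \<alpha> m n - hank \<alpha> m n) *\<^sub>v x
    = (toeplitz_symbol \<alpha> m (real j * pi * h) / toeplitz_symbol \<beta> m (real j * pi * h))
      \<cdot>\<^sub>v ((toep \<beta> m n - hank \<beta> m n) *\<^sub>v x)"
proof -
  define t where "t = real j * pi * h"
  have "real j * pi * (real (k + 1) - 1/2) * h = t * (of_int (int k) + 1/2)" for k
    by (simp add: t_def algebra_simps)
  then have x_shifted_sine: "x = vec n (\<lambda>k. shifted_sine C t (int k))"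
    unfolding x_def shifted_sine_def by simp
  have "t * (2 * real n + 1) = 2 * pi * real j"
    by (simp add: t_def h field_simps)
  note reflect_right = shifted_sine_reflect_right[OF this]
  have eigenvector: "(toep \<xi> m n - hank \<xi> m n) *\<^sub>v x = toeplitz_symbol \<xi> m t \<cdot>\<^sub>v x" for \<xi>
    unfolding x_shifted_sine
    by (rule toep_minus_hank_mult_vec[OF m shifted_sine_reflect_left reflect_right shifted_sine_three_term])
  define q where "q = real j / (2 * real n + 1)"
  have "0 < q" "q < 1"
    using j by (auto simp: q_def)
  moreover have "t = 2 * pi * q"
    by (simp add: t_def h q_def field_simps)
  ultimately have "0 < t" "t < 2 * pi"
    by auto
  then have "x $ 0 \<noteq> 0"
    using shifted_sine_zero_nonzero[OF C] j by (simp add: x_shifted_sine)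
  then have x_nonzero: "x \<noteq> 0\<^sub>v n"
    using j by auto
  have x_carrier: "x \<in> carrier_vec n"
    by (simp add: x_def)
  show ?thesis
    using x_nonzero generalized_eigenpair_of_common_eigenvector[OF minus_carrier_mat[OF hank_carrier_mat] B
        x_carrier x_nonzero eigenvector eigenvector]
    unfolding t_def by blast
qed

theorem mainTheorem1:
  fixes n m :: nat and \<alpha> \<beta> :: "nat \<Rightarrow> complex" and C :: complex
  assumes "n \<ge> 2" and "1 \<le> m" and "m \<le> n - 1"
    and "invertible_mat (toep \<beta> m n - hank \<beta> m n)"
    and "C \<noteq> 0"
  shows "\<forall>j \<in> {1..n}.
    (let h = 1 / (real n + 1/2);
         A = toep \<alpha> m n - hank \<alpha> m n;
         B = toep \<beta> m n - hank \<beta> m n;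
         lam = (\<alpha> 0 + 2 * (\<Sum>l=1..m. \<alpha> l * complex_of_real (cos (real l * real j * pi * h))))
             / (\<beta> 0 + 2 * (\<Sum>l=1..m. \<beta> l * complex_of_real (cos (real l * real j * pi * h))));
         x = vec n (\<lambda>k. C * complex_of_real (sin (real j * pi * (real (k + 1) - 1/2) * h)))
     in x \<noteq> 0\<^sub>v n \<and> A *\<^sub>v x = lam \<cdot>\<^sub>v (B *\<^sub>v x))"
  using toep_minus_hank_sine_generalized_eigenpair[OF assms(3-5) _ _ refl]
  unfolding Let_def toeplitz_symbol_def mult.assoc Ball_def atLeastAtMost_iff
  by blast

end
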